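(* Let $a$ and $b$ be relatively prime integers with $1<a<b$, let $(u,v)$ be the definitely least solution of $ax+by=1$, let $S=\langle a,b\rangle$, and let $\alpha:T(S)\to I(S)$ be the bijection $\alpha(x)=F(S)-x$. Then the number of sets in the collection $\{\alpha^{-1}(I_{i,a}(S)) : i\in[1,a-1],\ I_{i,a}(S)\neq\varnothing\}$ is $|v|$.
   Context: $\langle a,b\rangle=\{\lambda_1a+\lambda_2b:\lambda_1,\lambda_2\in\mathbb{N}\}$. $F(S)$ is the largest integer not in $S$. $I(S)$ is the set of isolated gaps ($x\in\mathbb{N}\setminus S$ with $x-1,x+1\in S$). $N(S)=\{s\in S:s<F(S)\}$, $T(S)=\{s\in N(S):s-1\notin S,\ s+1\notin S\}$; since $S$ is symmetric, $x\mapsto F(S)-x$ is a bijection $T(S)\to I(S)$. For $i\in\{1,\dots,a-1\}$, $I_{i,a}(S)=\{s\in I(S):s\equiv i\pmod a\}$. The definitely least solution $(u,v)$ of $ax+by=1$ is the unique integer solution with $|u|,|v|$ minimal; equivalently the one with $|u|\le b/2$, $|v|\le a/2$. *)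

theory Defs
  imports Main
begin

definition numsg2 :: "nat \<Rightarrow> nat \<Rightarrow> nat set" where
  "numsg2 a b = {n. \<exists>l1 l2. n = l1 * a + l2 * b}"

definition frob :: "nat set \<Rightarrow> nat" where
  "frob S = Max (UNIV - S)"

definition isol_gaps :: "nat set \<Rightarrow> nat set" where
  "isol_gaps S = {x. x \<notin> S \<and> 0 < x \<and> x - 1 \<in> S \<and> x + 1 \<in> S}"

definition Nset :: "nat set \<Rightarrow> nat set" where
  "Nset S = {s \<in> S. s < frob S}"

text \<open>T(S): elements s of N(S) with s-1 and s+1 not in S; for s = 0 the integer
  s-1 = -1 is not in S, which is rendered by the disjunct s = 0.\<close>
definition Tset :: "nat set \<Rightarrow> nat set" where
  "Tset S = {s \<in> Nset S. (s = 0 \<or> s - 1 \<notin> S) \<and> s + 1 \<notin> S}"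

definition isol_gaps_mod :: "nat set \<Rightarrow> nat \<Rightarrow> nat \<Rightarrow> nat set" where
  "isol_gaps_mod S i a = {s \<in> isol_gaps S. s mod a = i}"

definition alpha_preimage :: "nat set \<Rightarrow> nat set \<Rightarrow> nat set" where
  "alpha_preimage S X = {x \<in> Tset S. frob S - x \<in> X}"

end

(*
  Put R(n) = n v mod a. Since b v = 1 (mod a), b R(n) is the least element of S = <a,b>
  congruent to n modulo a, so n is in S iff b R(n) <= n. From this S is symmetric with
  F(S) = ab - a - b; hence x -> F(S) - x maps T(S) onto I(S), and the preimages of the
  nonempty classes I_{i,a}(S) are nonempty and pairwise distinct, so they are counted by
  the residues i that contain an isolated gap. Going from n to n + 1 adds c = v mod a to
  R(n) modulo a, and this shows that the residue class of i contains an isolated gap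
  (namely its largest gap b R(i) - a) iff R(i) >= max c (a - c). As R permutes the
  residues modulo a, there are a - max c (a - c) = min c (a - c) such classes, and this
  is |v| because 2 |v| <= a.
*)
theory Submission
  imports Defs
begin

definition symmetric_about :: "nat set \<Rightarrow> nat \<Rightarrow> bool" where
  "symmetric_about S F \<longleftrightarrow> (\<forall>n>F. n \<in> S) \<and> (\<forall>n\<le>F. n \<in> S \<longleftrightarrow> F - n \<notin> S)"

lemma symmetric_aboutD:
  assumes "symmetric_about S F"
  shows symmetric_about_above: "F < n \<Longrightarrow> n \<in> S"
    and symmetric_about_reflect: "n \<le> F \<Longrightarrow> n \<in> S \<longleftrightarrow> F - n \<notin> S"
  using assms unfolding symmetric_about_def by blast+

lemma frob_eq_if_symmetric_about:
  assumes "symmetric_about S F" and "0 \<in> S"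
  shows "frob S = F"
proof -
  have "F \<notin> S"
    using symmetric_about_reflect[OF assms(1), of 0] assms(2) by simp
  moreover have gaps: "UNIV - S \<subseteq> {..F}"
    using symmetric_about_above[OF assms(1)] by (auto simp: not_less[symmetric])
  moreover have "finite (UNIV - S)"
    using gaps by (rule finite_subset) simp
  ultimately show ?thesis
    unfolding frob_def by (intro Max_eqI) auto
qed

lemma isol_gap_reflects_into_Tset:
  assumes S: "symmetric_about S F" "0 \<in> S" and g: "g \<in> isol_gaps S"
  shows "g \<le> F" and "F - g \<in> Tset S"
proof -
  note reflect = symmetric_about_reflect[OF S(1)]
  from g have "0 < g" "g \<notin> S" "g - 1 \<in> S" "g + 1 \<in> S"
    by (auto simp: isol_gaps_def)
  then show "g \<le> F"
    using symmetric_about_above[OF S(1)] by (auto simp: not_less[symmetric])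
  have "F - g \<in> S"
    using reflect[of "F - g"] \<open>g \<le> F\<close> \<open>g \<notin> S\<close> by simp
  moreover have "F - g < F"
    using \<open>0 < g\<close> \<open>g \<le> F\<close> by simp
  moreover have "F - g + 1 \<notin> S"
  proof -
    have "F - (F - g + 1) = g - 1" using \<open>0 < g\<close> \<open>g \<le> F\<close> by simp
    with reflect[of "F - g + 1"] \<open>0 < g\<close> \<open>g \<le> F\<close> \<open>g - 1 \<in> S\<close> show ?thesis
      by simp
  qed
  moreover have "F - g = 0 \<or> F - g - 1 \<notin> S"
  proof (cases "F - g = 0")
    case False
    then have "F - (F - g - 1) = g + 1" by simp
    then show ?thesis using reflect[of "F - g - 1"] \<open>g + 1 \<in> S\<close> by simp
  qed simp
  ultimately show "F - g \<in> Tset S"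
    using frob_eq_if_symmetric_about[OF S] by (simp add: Tset_def Nset_def)
qed

lemma card_alpha_preimages_isol_gaps_mod:
  assumes S: "symmetric_about S F" "0 \<in> S"
  shows "card {alpha_preimage S (isol_gaps_mod S i a) | i. i \<in> A \<and> isol_gaps_mod S i a \<noteq> {}}
           = card {i \<in> A. isol_gaps_mod S i a \<noteq> {}}"
proof -
  let ?P = "\<lambda>i. alpha_preimage S (isol_gaps_mod S i a)"
  let ?J = "{i \<in> A. isol_gaps_mod S i a \<noteq> {}}"
  have witness: "\<exists>x \<in> ?P i. frob S - x \<in> isol_gaps_mod S i a" if "i \<in> ?J" for i
  proof -
    obtain g where g: "g \<in> isol_gaps_mod S i a" using \<open>i \<in> ?J\<close> by blast
    then have "g \<in> isol_gaps S" by (simp add: isol_gaps_mod_def)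
    from isol_gap_reflects_into_Tset[OF S this] frob_eq_if_symmetric_about[OF S]
    have "F - g \<in> Tset S" and "frob S - (F - g) = g" by simp_all
    with g show ?thesis by (auto simp: alpha_preimage_def)
  qed
  have "inj_on ?P ?J"
  proof
    fix i j assume "i \<in> ?J" "j \<in> ?J" and eq: "?P i = ?P j"
    obtain x where "x \<in> ?P i" and i: "frob S - x \<in> isol_gaps_mod S i a"
      using witness[OF \<open>i \<in> ?J\<close>] by blast
    with eq have "frob S - x \<in> isol_gaps_mod S j a" by (simp add: alpha_preimage_def)
    with i show "i = j" by (simp add: isol_gaps_mod_def)
  qed
  moreover have "{?P i | i. i \<in> A \<and> isol_gaps_mod S i a \<noteq> {}} = ?P ` ?J" by blast
  ultimately show ?thesis by (simp add: card_image)
qed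

lemma min_mod_eq_abs:
  fixes v m :: int
  assumes "2 * \<bar>v\<bar> \<le> m"
  shows "min (v mod m) (m - v mod m) = \<bar>v\<bar>"
proof (cases "0 \<le> v")
  case True
  show ?thesis
  proof (cases "v = m")
    case False
    with True assms have "v mod m = v" by (intro mod_pos_pos_trivial) auto
    with True assms show ?thesis by simp
  qed (use assms in auto)
next
  case False
  have "v mod m = (v + m) mod m" by simp
  also have "\<dots> = v + m" using False assms by (intro mod_pos_pos_trivial) auto
  finally show ?thesis using False assms by simp
qed

lemma zero_mem_numsg2: "0 \<in> numsg2 a b"
  by (auto simp: numsg2_def)

locale numsg2_bezout =
  fixes a b :: nat and v :: int
  assumes a_gt_1: "1 < a" and a_less_b: "a < b"
    and bezout: "int b * v mod int a = 1"
begin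

definition apery_coeff :: "nat \<Rightarrow> int" where
  "apery_coeff n = int n * v mod int a"

lemma apery_coeff_bounds: "0 \<le> apery_coeff n" "apery_coeff n < int a"
  using a_gt_1 by (simp_all add: apery_coeff_def)

lemma apery_coeff_mod: "apery_coeff (n mod a) = apery_coeff n"
  by (simp add: apery_coeff_def of_nat_mod mod_mult_left_eq)

lemma apery_coeff_0 [simp]: "apery_coeff 0 = 0"
  by (simp add: apery_coeff_def)

lemma mult_b_apery_coeff_mod: "int b * apery_coeff n mod int a = int n mod int a"
proof -
  have "int b * apery_coeff n mod int a = int n * (int b * v mod int a) mod int a"
    by (simp add: apery_coeff_def mod_mult_right_eq ac_simps)
  then show ?thesis by (simp add: bezout)
qed

lemma apery_coeff_inj:
  assumes "i < a" "j < a" and "apery_coeff i = apery_coeff j"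
  shows "i = j"
proof -
  have "int i mod int a = int j mod int a"
    using mult_b_apery_coeff_mod[of i] mult_b_apery_coeff_mod[of j] assms(3) by simp
  with assms(1,2) show ?thesis by simp
qed

lemma apery_coeff_1_pos: "0 < apery_coeff 1"
proof -
  have "apery_coeff 1 \<noteq> apery_coeff 0"
    using apery_coeff_inj[of 1 0] a_gt_1 by auto
  then show ?thesis using apery_coeff_bounds(1)[of 1] by simp
qed

lemma apery_coeff_Suc:
  "apery_coeff (Suc n) = (if apery_coeff n + apery_coeff 1 < int a
     then apery_coeff n + apery_coeff 1 else apery_coeff n + apery_coeff 1 - int a)"
proof -
  have "apery_coeff (Suc n) = (apery_coeff n + apery_coeff 1) mod int a"
    by (simp add: apery_coeff_def algebra_simps mod_add_eq)
  moreover have "(apery_coeff n + apery_coeff 1) mod int a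
      = apery_coeff n + apery_coeff 1 - int a" if "\<not> apery_coeff n + apery_coeff 1 < int a"
  proof -
    have "(apery_coeff n + apery_coeff 1) mod int a
        = (apery_coeff n + apery_coeff 1 - int a) mod int a" by simp
    also have "\<dots> = apery_coeff n + apery_coeff 1 - int a"
      using that apery_coeff_bounds[of n] apery_coeff_bounds[of 1] by (intro mod_pos_pos_trivial) auto
    finally show ?thesis .
  qed
  ultimately show ?thesis
    using apery_coeff_bounds[of n] apery_coeff_1_pos by auto
qed

lemma mem_numsg2_iff: "n \<in> numsg2 a b \<longleftrightarrow> int b * apery_coeff n \<le> int n"
proof
  assume "n \<in> numsg2 a b"
  then obtain k l where n: "n = k * a + l * b" by (auto simp: numsg2_def)
  have "apery_coeff n = apery_coeff (l * b)"
    using apery_coeff_mod[of n] apery_coeff_mod[of "l * b"] by (simp add: n)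
  also have "\<dots> = int l * (int b * v mod int a) mod int a"
    by (simp add: apery_coeff_def mod_mult_right_eq ac_simps)
  finally have "apery_coeff n \<le> int l"
    using a_gt_1 by (simp add: bezout zmod_le_nonneg_dividend)
  then have "int b * apery_coeff n \<le> int b * int l"
    by (simp add: mult_left_mono)
  also have "\<dots> \<le> int n" by (simp add: n)
  finally show "int b * apery_coeff n \<le> int n" .
next
  assume le: "int b * apery_coeff n \<le> int n"
  obtain k where k: "int n - int b * apery_coeff n = int a * k"
    using mult_b_apery_coeff_mod[of n] by (metis mod_eq_dvd_iff dvdE)
  with le have "0 \<le> int a * k" by simp
  with a_gt_1 have "0 \<le> k" by (simp add: zero_le_mult_iff)
  with k apery_coeff_bounds(1)[of n]
  have "int n = int (nat k * a + nat (apery_coeff n) * b)" by (simp add: algebra_simps)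
  then show "n \<in> numsg2 a b" unfolding numsg2_def of_nat_eq_iff by blast
qed

lemma not_mem_numsg2_iff: "n \<notin> numsg2 a b \<longleftrightarrow> int n + int a \<le> int b * apery_coeff n"
proof
  assume "n \<notin> numsg2 a b"
  then have less: "int n < int b * apery_coeff n" by (simp add: mem_numsg2_iff)
  obtain k where k: "int n - int b * apery_coeff n = int a * k"
    using mult_b_apery_coeff_mod[of n] by (metis mod_eq_dvd_iff dvdE)
  with less have "int a * k < 0" by simp
  with a_gt_1 have "int a * k \<le> int a * (-1)"
    by (intro mult_left_mono) (auto simp: mult_less_0_iff)
  with k show "int n + int a \<le> int b * apery_coeff n" by simp
qed (use a_gt_1 mem_numsg2_iff in auto)

definition F :: nat where
  "F = a * b - a - b"

lemma int_F: "int F = int a * int b - int a - int b"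
proof -
  have "2 * b \<le> a * b" using a_gt_1 by (intro mult_right_mono) auto
  with a_less_b have "a + b \<le> a * b" by linarith
  then show ?thesis by (simp add: F_def of_nat_diff)
qed

lemma apery_coeff_F: "apery_coeff F = int a - 1"
proof -
  have "int b * v mod int a = 1 mod int a"
    using bezout a_gt_1 by simp
  then obtain q where q: "int b * v - 1 = int a * q"
    unfolding mod_eq_dvd_iff by (elim dvdE)
  have "int F * v = int a * (int b * v - v) - int b * v"
    unfolding int_F by (simp add: algebra_simps)
  also have "\<dots> = int a * (int b * v - v - q) - 1"
    using q by (simp add: right_diff_distrib)
  finally have "apery_coeff F = (- 1) mod int a"
    by (simp add: apery_coeff_def mod_eq_dvd_iff)
  with a_gt_1 show ?thesis by (simp add: zmod_minus1)
qed

lemma apery_coeff_reflect: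
  assumes "n \<le> F"
  shows "apery_coeff n + apery_coeff (F - n) = int a - 1"
proof -
  define s where "s = apery_coeff n + apery_coeff (F - n)"
  have "s mod int a = (int n + int (F - n)) * v mod int a"
    by (simp add: s_def apery_coeff_def mod_add_eq distrib_right)
  also have "\<dots> = apery_coeff F"
    by (simp only: apery_coeff_def of_nat_add[symmetric] le_add_diff_inverse[OF assms])
  finally have s_mod: "s mod int a = int a - 1"
    by (simp add: apery_coeff_F)
  have "0 \<le> s" "s \<le> 2 * int a - 2"
    using apery_coeff_bounds[of n] apery_coeff_bounds[of "F - n"] by (auto simp: s_def)
  show ?thesis
  proof (cases "s < int a")
    case True
    with \<open>0 \<le> s\<close> s_mod show ?thesis by (simp add: s_def)
  next
    case False
    have "s mod int a = (s - int a) mod int a" by simp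
    also have "\<dots> = s - int a"
      using False \<open>s \<le> 2 * int a - 2\<close> by (intro mod_pos_pos_trivial) auto
    finally show ?thesis using s_mod \<open>s \<le> 2 * int a - 2\<close> by simp
  qed
qed

lemma symmetric_about_numsg2: "symmetric_about (numsg2 a b) F"
  unfolding symmetric_about_def
proof (intro conjI allI impI)
  fix n assume "F < n"
  show "n \<in> numsg2 a b"
  proof (rule ccontr)
    assume "n \<notin> numsg2 a b"
    then have "int n + int a \<le> int b * apery_coeff n"
      by (simp add: not_mem_numsg2_iff)
    also have "\<dots> \<le> int b * (int a - 1)"
      using apery_coeff_bounds(2)[of n] by (intro mult_left_mono) auto
    finally show False
      using \<open>F < n\<close> int_F by (simp add: algebra_simps)
  qed
next
  fix n assume "n \<le> F"
  then have "apery_coeff (F - n) = int a - 1 - apery_coeff n"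
    using apery_coeff_reflect[of n] by simp
  then have "int b * apery_coeff (F - n) = int a * int b - int b - int b * apery_coeff n"
    by (simp only:) (simp add: algebra_simps)
  then have "F - n \<in> numsg2 a b \<longleftrightarrow> int n + int a \<le> int b * apery_coeff n"
    using \<open>n \<le> F\<close> by (simp add: mem_numsg2_iff of_nat_diff int_F) arith
  then show "n \<in> numsg2 a b \<longleftrightarrow> F - n \<notin> numsg2 a b"
    using not_mem_numsg2_iff by blast
qed

lemma apery_coeff_isol_gap:
  assumes "g \<in> isol_gaps (numsg2 a b)"
  shows "max (apery_coeff 1) (int a - apery_coeff 1) \<le> apery_coeff g"
proof -
  let ?R = apery_coeff and ?c = "apery_coeff 1"
  from assms have "g \<notin> numsg2 a b" "0 < g" "g - 1 \<in> numsg2 a b" "Suc g \<in> numsg2 a b"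
    by (auto simp: isol_gaps_def)
  then have gap: "int g + int a \<le> int b * ?R g"
    by (simp only: not_mem_numsg2_iff)
  have pred: "int b * ?R (g - 1) \<le> int g - 1"
    using \<open>g - 1 \<in> numsg2 a b\<close> \<open>0 < g\<close> by (simp add: mem_numsg2_iff of_nat_diff)
  have succ: "int b * ?R (Suc g) \<le> int g + 1"
    using \<open>Suc g \<in> numsg2 a b\<close> by (simp add: mem_numsg2_iff)
  have "?c \<le> ?R g"
  proof (rule ccontr)
    assume "\<not> ?c \<le> ?R g"
    then have "?R (g - 1) = ?R g - ?c + int a"
      using apery_coeff_Suc[of "g - 1"] apery_coeff_bounds[of "g - 1"] \<open>0 < g\<close> by auto
    then have "int b * (?R g + 1) \<le> int b * ?R (g - 1)"
      using apery_coeff_bounds(2)[of 1] by (intro mult_left_mono) auto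
    with gap pred show False by (simp add: algebra_simps)
  qed
  moreover have "int a - ?c \<le> ?R g"
  proof (rule ccontr)
    assume "\<not> int a - ?c \<le> ?R g"
    then have "?R (Suc g) = ?R g + ?c"
      using apery_coeff_Suc[of g] by auto
    then have "int b * (?R g + 1) \<le> int b * ?R (Suc g)"
      using apery_coeff_1_pos by (intro mult_left_mono) auto
    with gap succ a_gt_1 show False by (simp add: algebra_simps)
  qed
  ultimately show ?thesis by simp
qed

lemma isol_gap_exists:
  assumes "i < a" and "max (apery_coeff 1) (int a - apery_coeff 1) \<le> apery_coeff i"
  shows "\<exists>g \<in> isol_gaps (numsg2 a b). g mod a = i"
proof -
  let ?R = apery_coeff and ?c = "apery_coeff 1"
  define y where "y = ?R i"
  have "1 \<le> y" using assms(2) apery_coeff_1_pos by (simp add: y_def)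
  then have "int b \<le> int b * y"
    using mult_left_mono[of 1 y "int b"] by simp
  with a_less_b have "int a < int b * y" by linarith
  \<comment> \<open>the largest gap congruent to \<open>i\<close>\<close>
  define g where "g = nat (int b * y - int a)"
  have g: "int g = int b * y - int a"
    using \<open>int a < int b * y\<close> by (simp add: g_def)
  then have "0 < g" using \<open>int a < int b * y\<close> by simp
  have "int g mod int a = int i mod int a"
    using mult_b_apery_coeff_mod[of i] by (simp add: g y_def mod_diff_right_eq[symmetric])
  then have "g mod a = i"
    using assms(1) by (simp add: of_nat_mod[symmetric] del: of_nat_mod)
  then have "?R g = y"
    using apery_coeff_mod[of g] by (simp add: y_def)
  have "g \<notin> numsg2 a b"
    by (simp add: not_mem_numsg2_iff \<open>?R g = y\<close> g)
  moreover have "g - 1 \<in> numsg2 a b"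
  proof -
    have "?R (g - 1) = y - ?c"
      using apery_coeff_Suc[of "g - 1"] apery_coeff_bounds[of "g - 1"] assms(2)
        \<open>0 < g\<close> \<open>?R g = y\<close> y_def by (auto split: if_splits)
    then have "int b * ?R (g - 1) = int b * y - int b * ?c"
      by (simp add: right_diff_distrib)
    moreover have "int b \<le> int b * ?c"
      using apery_coeff_1_pos mult_left_mono[of 1 ?c "int b"] by simp
    ultimately have "int b * ?R (g - 1) \<le> int g - 1"
      using g a_less_b by linarith
    with \<open>0 < g\<close> show ?thesis by (simp add: mem_numsg2_iff of_nat_diff)
  qed
  moreover have "g + 1 \<in> numsg2 a b"
  proof -
    have "?R (Suc g) = y - (int a - ?c)"
      using apery_coeff_Suc[of g] assms(2) \<open>?R g = y\<close> y_def by auto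
    then have "int b * ?R (Suc g) = int b * y - int b * (int a - ?c)"
      by (simp add: right_diff_distrib)
    moreover have "int b \<le> int b * (int a - ?c)"
      using apery_coeff_bounds(2)[of 1] mult_left_mono[of 1 "int a - ?c" "int b"] by simp
    ultimately have "int b * ?R (Suc g) \<le> int g + 1"
      using g a_less_b by linarith
    then show ?thesis by (simp add: mem_numsg2_iff)
  qed
  ultimately show ?thesis
    using \<open>0 < g\<close> \<open>g mod a = i\<close> by (auto simp: isol_gaps_def)
qed

lemma isol_gaps_mod_nonempty_iff:
  assumes "i < a"
  shows "isol_gaps_mod (numsg2 a b) i a \<noteq> {}
           \<longleftrightarrow> max (apery_coeff 1) (int a - apery_coeff 1) \<le> apery_coeff i"
proof
  assume "isol_gaps_mod (numsg2 a b) i a \<noteq> {}"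
  then obtain g where "g \<in> isol_gaps (numsg2 a b)" and "g mod a = i"
    by (auto simp: isol_gaps_mod_def)
  then show "max (apery_coeff 1) (int a - apery_coeff 1) \<le> apery_coeff i"
    using apery_coeff_isol_gap apery_coeff_mod by metis
next
  assume "max (apery_coeff 1) (int a - apery_coeff 1) \<le> apery_coeff i"
  with isol_gap_exists[OF assms] show "isol_gaps_mod (numsg2 a b) i a \<noteq> {}"
    by (auto simp: isol_gaps_mod_def)
qed

lemma inj_on_apery_coeff: "inj_on apery_coeff {..<a}"
  by (auto intro: inj_onI apery_coeff_inj)

lemma apery_coeff_image: "apery_coeff ` {..<a} = {0..<int a}"
proof (rule card_subset_eq)
  show "apery_coeff ` {..<a} \<subseteq> {0..<int a}"
    using apery_coeff_bounds by auto
  show "card (apery_coeff ` {..<a}) = card {0..<int a}"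
    by (simp add: card_image inj_on_apery_coeff)
qed simp

lemma card_apery_coeff_ge:
  assumes "0 \<le> t"
  shows "card {i. i < a \<and> t \<le> apery_coeff i} = nat (int a - t)"
proof -
  have "apery_coeff ` {i. i < a \<and> t \<le> apery_coeff i} = {t..<int a}"
    using apery_coeff_image assms by fastforce
  moreover have "inj_on apery_coeff {i. i < a \<and> t \<le> apery_coeff i}"
    by (rule inj_on_subset[OF inj_on_apery_coeff]) auto
  ultimately show ?thesis
    by (metis card_atLeastLessThan_int card_image)
qed

lemma card_residues_with_isol_gap:
  "card {i \<in> {1..a-1}. isol_gaps_mod (numsg2 a b) i a \<noteq> {}}
     = nat (min (apery_coeff 1) (int a - apery_coeff 1))"
proof -
  let ?m = "max (apery_coeff 1) (int a - apery_coeff 1)"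
  have "i \<in> {1..a-1} \<and> isol_gaps_mod (numsg2 a b) i a \<noteq> {}
      \<longleftrightarrow> i < a \<and> ?m \<le> apery_coeff i" for i
  proof (cases "i < a")
    case True
    moreover have "\<not> ?m \<le> apery_coeff 0"
      using apery_coeff_1_pos by simp
    ultimately show ?thesis
      using isol_gaps_mod_nonempty_iff[OF True] by (cases "i = 0") auto
  qed auto
  then have "{i \<in> {1..a-1}. isol_gaps_mod (numsg2 a b) i a \<noteq> {}}
      = {i. i < a \<and> ?m \<le> apery_coeff i}"
    by blast
  also have "card \<dots> = nat (int a - ?m)"
    using apery_coeff_1_pos by (intro card_apery_coeff_ge) simp
  also have "int a - ?m = min (apery_coeff 1) (int a - apery_coeff 1)"
    by simp
  finally show ?thesis .
qed

end

theorem lemma3p8: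
  fixes a b :: nat and u v :: int
  assumes "coprime a b" and "1 < a" and "a < b"
    and "int a * u + int b * v = 1"
    and "2 * \<bar>u\<bar> \<le> int b" and "2 * \<bar>v\<bar> \<le> int a"
  shows "card {alpha_preimage (numsg2 a b) (isol_gaps_mod (numsg2 a b) i a) | i.
               i \<in> {1..a-1} \<and> isol_gaps_mod (numsg2 a b) i a \<noteq> {}} = nat \<bar>v\<bar>"
proof -
  have "int b * v - 1 = int a * (- u)"
    using assms(4) by simp
  then have "int b * v mod int a = 1 mod int a"
    unfolding mod_eq_dvd_iff by (rule dvdI)
  then have "int b * v mod int a = 1"
    using assms(2) by simp
  then interpret numsg2_bezout a b v
    using assms(2,3) by unfold_locales
  have "card {alpha_preimage (numsg2 a b) (isol_gaps_mod (numsg2 a b) i a) | i.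
               i \<in> {1..a-1} \<and> isol_gaps_mod (numsg2 a b) i a \<noteq> {}}
      = card {i \<in> {1..a-1}. isol_gaps_mod (numsg2 a b) i a \<noteq> {}}"
    by (rule card_alpha_preimages_isol_gaps_mod[OF symmetric_about_numsg2 zero_mem_numsg2])
  also have "\<dots> = nat (min (apery_coeff 1) (int a - apery_coeff 1))"
    by (rule card_residues_with_isol_gap)
  also have "\<dots> = nat \<bar>v\<bar>"
    using min_mod_eq_abs[OF assms(6)] by (simp add: apery_coeff_def)
  finally show ?thesis .
qed

end
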